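(* Let $\rho_1,\rho_2$ be finite nonempty sets of integers greater than $1$, each consisting of pairwise coprime elements. If $Q_{\rho_1}(x)=Q_{\rho_2}(x)$, then $\rho_1=\rho_2$.
   Context: For a finite nonempty set $\rho=\{r_1,\dots,r_s\}$ of integers with $r_i>1$ and $\gcd(r_i,r_j)=1$ for $i\ne j$, put $n_0=\prod_i r_i$ and define the inclusion-exclusion polynomial $$Q_\rho(x)=\prod_{I\subseteq\{1,\dots,s\}}\left(x^{n_0/\prod_{i\in I}r_i}-1\right)^{(-1)^{|I|}},$$ i.e. $Q_\rho(x)=\frac{(x^{n_0}-1)\prod_{i<j}(x^{n_{ij}}-1)\cdots}{\prod_i(x^{n_i}-1)\prod_{i<j<k}(x^{n_{ijk}}-1)\cdots}$ with $n_i=n_0/r_i$, $n_{ij}=n_0/(r_ir_j)$, etc.; it is a polynomial with integer coefficients. *)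

theory Defs
  imports "HOL-Computational_Algebra.Polynomial"
begin

definition xpow_minus_one :: "nat \<Rightarrow> int poly" where
  "xpow_minus_one k = monom 1 k - 1"

text \<open>Inclusion-exclusion polynomial Q_rho: with n0 the product of the elements of rho,
  the product over subsets I of rho of (x^(n0 / prod I) - 1)^((-1)^|I|), i.e. the product
  of the factors with |I| even divided by the product of the factors with |I| odd
  (the division is exact).\<close>
definition incl_excl_poly :: "nat set \<Rightarrow> int poly" where
  "incl_excl_poly \<rho> =
     (\<Prod>I\<in>{I. I \<subseteq> \<rho> \<and> even (card I)}. xpow_minus_one (\<Prod>\<rho> div \<Prod>I))
     div (\<Prod>I\<in>{I. I \<subseteq> \<rho> \<and> odd (card I)}. xpow_minus_one (\<Prod>\<rho> div \<Prod>I))"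

definition admissible_set :: "nat set \<Rightarrow> bool" where
  "admissible_set \<rho> \<longleftrightarrow> finite \<rho> \<and> \<rho> \<noteq> {} \<and> (\<forall>r\<in>\<rho>. r > 1) \<and>
     (\<forall>a\<in>\<rho>. \<forall>b\<in>\<rho>. a \<noteq> b \<longrightarrow> coprime a b)"

end

theory Submission
  imports Defs "HOL-Analysis.Complex_Transcendental" "HOL-Computational_Algebra.Fundamental_Theorem_Algebra"
begin

text \<open>Over \<open>\<complex>\<close>, with \<open>N = \<Prod>\<rho>\<close>, the polynomial \<open>Q\<^sub>\<rho>\<close> has only simple roots, namely
  the \<open>z\<close> with \<open>z\<^sup>N = 1\<close> but \<open>z\<^sup>N\<^sup>/\<^sup>r \<noteq> 1\<close> for all \<open>r \<in> \<rho>\<close>: the multiplicity of \<open>z\<close>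
  is an alternating count of the subsets of \<open>{r \<in> \<rho>. z\<^sup>N\<^sup>/\<^sup>r = 1}\<close>.
  This root set determines \<open>\<rho>\<close>. It contains a primitive \<open>N\<close>-th root of unity, which recovers
  \<open>N\<close>; it does not contain a primitive \<open>N/r\<close>-th root of unity, which forces some element
  of the other set to divide \<open>r\<close>; pairwise coprimality then gives equality.\<close>

lemma map_poly_of_int_add:
  "map_poly of_int (p + q) = (map_poly of_int p + map_poly of_int q :: 'a::comm_ring_1 poly)"
  by (rule poly_eqI) (simp add: coeff_map_poly)

lemma map_poly_of_int_diff:
  "map_poly of_int (p - q) = (map_poly of_int p - map_poly of_int q :: 'a::comm_ring_1 poly)"
  by (rule poly_eqI) (simp add: coeff_map_poly)

lemma map_poly_of_int_mult:
  "map_poly of_int (p * q) = (map_poly of_int p * map_poly of_int q :: 'a::comm_ring_1 poly)"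
  by (rule poly_eqI) (simp add: coeff_map_poly coeff_mult of_int_sum)

lemma map_poly_of_int_prod:
  "map_poly of_int (\<Prod>x\<in>A. f x) = (\<Prod>x\<in>A. map_poly of_int (f x) :: 'a::comm_ring_1 poly)"
  by (induction A rule: infinite_finite_induct) (simp_all add: map_poly_of_int_mult)

lemma map_poly_of_int_eq_0_iff:
  "(map_poly of_int p :: 'a::ring_char_0 poly) = 0 \<longleftrightarrow> p = 0"
  by (rule map_poly_eq_0_iff) auto

lemma degree_map_poly_of_int:
  "degree (map_poly of_int p :: 'a::ring_char_0 poly) = degree p"
  by (rule degree_map_poly) auto

lemma map_poly_of_int_xpow_minus_one:
  "map_poly of_int (xpow_minus_one n) = (monom 1 n - 1 :: 'a::comm_ring_1 poly)"
  unfolding xpow_minus_one_def by (simp add: map_poly_of_int_diff map_poly_monom)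

text \<open>Division by a monic integer polynomial leaves an integer remainder of smaller degree,
  so divisibility over a larger ring of characteristic 0 descends to the integers.\<close>

lemma monic_dvd_if_map_poly_of_int_dvd:
  fixes f g :: "int poly"
  assumes monic: "lead_coeff g = 1"
    and dvd: "map_poly of_int g dvd (map_poly of_int f :: 'a::{idom,ring_char_0} poly)"
  shows "g dvd f"
proof -
  have "g \<noteq> 0" using monic by auto
  obtain q r where qr: "pseudo_divmod f g = (q, r)" by (cases "pseudo_divmod f g")
  note division = pseudo_divmod[OF \<open>g \<noteq> 0\<close> qr]
  have f_eq: "f = g * q + r" using division(1) monic by simp
  then have "(map_poly of_int f :: 'a poly) = map_poly of_int g * map_poly of_int q + map_poly of_int r"
    by (simp add: map_poly_of_int_add map_poly_of_int_mult)
  with dvd have "map_poly of_int g dvd (map_poly of_int r :: 'a poly)"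
    by (metis dvd_add_right_iff dvd_triv_left)
  have "r = 0"
  proof (rule ccontr)
    assume "r \<noteq> 0"
    then have "degree (map_poly of_int g :: 'a poly) \<le> degree (map_poly of_int r :: 'a poly)"
      using \<open>map_poly of_int g dvd map_poly of_int r\<close>
      by (intro dvd_imp_degree_le) (auto simp: map_poly_of_int_eq_0_iff)
    with division(2) \<open>r \<noteq> 0\<close> show False by (simp add: degree_map_poly_of_int)
  qed
  with f_eq show ?thesis by simp
qed

lemma lead_coeff_monom_one_minus_one:
  assumes "n > 0"
  shows "lead_coeff (monom 1 n - 1 :: 'a::comm_ring_1 poly) = 1"
proof -
  have "degree (monom 1 n - 1 :: 'a poly) = n"
  proof (rule order_antisym)
    show "degree (monom 1 n - 1 :: 'a poly) \<le> n"
      by (rule degree_le) (auto simp: coeff_monom)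
    show "n \<le> degree (monom 1 n - 1 :: 'a poly)"
      by (rule le_degree) (use assms in \<open>simp add: coeff_monom\<close>)
  qed
  with assms show ?thesis by (simp add: coeff_monom)
qed

text \<open>\<open>x\<^sup>n - 1\<close> is coprime to its derivative \<open>n x\<^sup>n\<^sup>-\<^sup>1\<close>, so all its roots are simple.\<close>

lemma order_monom_one_minus_one:
  assumes "n > 0"
  shows "order z (monom 1 n - 1 :: 'a::field_char_0 poly) = (if z ^ n = 1 then 1 else 0)"
proof -
  let ?p = "monom 1 n - 1 :: 'a poly"
  have "rsquarefree ?p"
  proof (subst rsquarefree_roots, intro allI notI)
    fix a assume "poly ?p a = 0 \<and> poly (pderiv ?p) a = 0"
    then have "a ^ n = 1" "of_nat n * a ^ (n - 1) = 0"
      by (simp_all add: pderiv_diff pderiv_monom poly_monom)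
    with assms show False by (simp add: power_0_left)
  qed
  show ?thesis
  proof (cases "z ^ n = 1")
    case True
    then have "poly ?p z = 0" by (simp add: poly_monom)
    moreover have "?p \<noteq> 0" using assms by (simp add: monom_eq_1_iff)
    ultimately show ?thesis using True \<open>rsquarefree ?p\<close> by (simp add: rsquarefree_root_order)
  next
    case False
    then show ?thesis by (simp add: order_0I poly_monom)
  qed
qed

lemma order_prod:
  fixes f :: "'b \<Rightarrow> 'a::idom poly"
  assumes "finite A" "\<And>x. x \<in> A \<Longrightarrow> f x \<noteq> 0"
  shows "order z (\<Prod>x\<in>A. f x) = (\<Sum>x\<in>A. order z (f x))"
  using assms by (induction A rule: finite_induct) (auto simp: order_0I order_mult)

lemma order_prod_monom_one_minus_one:
  assumes "finite F" "\<And>I. I \<in> F \<Longrightarrow> m I > 0"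
  shows "order z (\<Prod>I\<in>F. monom 1 (m I) - 1 :: 'a::field_char_0 poly) = card {I\<in>F. z ^ m I = 1}"
proof -
  have "order z (\<Prod>I\<in>F. monom 1 (m I) - 1 :: 'a poly) = (\<Sum>I\<in>F. if z ^ m I = 1 then 1 else 0)"
    using assms
    by (subst order_prod)
      (auto intro!: sum.cong simp: monom_eq_1_iff order_monom_one_minus_one)
  also have "\<dots> = card {I\<in>F. z ^ m I = 1}"
    using assms(1) by (simp flip: sum.inter_filter)
  finally show ?thesis .
qed

lemma complex_poly_dvd_if_order_le:
  fixes p q :: "complex poly"
  assumes "p \<noteq> 0" "q \<noteq> 0" "\<And>z. order z q \<le> order z p"
  shows "q dvd p"
  using assms
proof (induction "degree q" arbitrary: p q rule: less_induct)
  case less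
  show ?case
  proof (cases "degree q = 0")
    case True
    then obtain c where "q = [:c:]" by (metis degree_eq_zeroE)
    with less.prems show ?thesis by (simp add: const_poly_dvd_iff dvd_field_iff)
  next
    case False
    then have "\<not> constant (poly q)" by (subst constant_degree)
    then obtain z where "poly q z = 0" using fundamental_theorem_of_algebra by blast
    then obtain q' where q': "q = [:-z,1:] * q'" by (metis poly_eq_0_iff_dvd dvdE)
    have "order z q \<noteq> 0" using \<open>poly q z = 0\<close> less.prems order_root by blast
    then have "poly p z = 0" using less.prems(3)[of z] order_root by fastforce
    then obtain p' where p': "p = [:-z,1:] * p'" by (metis poly_eq_0_iff_dvd dvdE)
    have "p' \<noteq> 0" "q' \<noteq> 0" using less.prems p' q' by auto
    then have "degree q' < degree q" unfolding q' by (subst degree_mult_eq) auto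
    moreover have "order w q' \<le> order w p'" for w
      using less.prems(3)[of w] less.prems(1,2) unfolding p' q'
      by (subst (asm) (1 2) order_mult) auto
    ultimately have "q' dvd p'" using less.hyps \<open>p' \<noteq> 0\<close> \<open>q' \<noteq> 0\<close> by blast
    then show ?thesis unfolding p' q' by (rule mult_dvd_mono[OF dvd_refl])
  qed
qed

lemma order_map_poly_of_int_div:
  fixes A B :: "int poly"
  assumes monic: "lead_coeff B = 1" and nz: "(map_poly of_int A :: complex poly) \<noteq> 0"
    and le: "\<And>z. order z (map_poly of_int B :: complex poly) \<le> order z (map_poly of_int A)"
  shows "order z (map_poly of_int (A div B) :: complex poly) =
           order z (map_poly of_int A :: complex poly) - order z (map_poly of_int B :: complex poly)"
proof -
  have "B \<noteq> 0" using monic by auto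
  then have "(map_poly of_int B :: complex poly) \<noteq> 0" by (simp add: map_poly_of_int_eq_0_iff)
  with nz le have "(map_poly of_int B :: complex poly) dvd map_poly of_int A"
    by (intro complex_poly_dvd_if_order_le)
  with monic have "B dvd A" by (rule monic_dvd_if_map_poly_of_int_dvd)
  then have "(map_poly of_int A :: complex poly) = map_poly of_int (A div B) * map_poly of_int B"
    by (metis dvd_div_mult_self map_poly_of_int_mult)
  with nz show ?thesis by (simp add: order_mult)
qed

lemma power_eq_one_if_dvd:
  fixes z :: "'a::monoid_mult"
  assumes "z ^ a = 1" "a dvd b"
  shows "z ^ b = 1"
proof -
  obtain k where "b = a * k" using assms(2) by (rule dvdE)
  with assms(1) show ?thesis by (simp add: power_mult)
qed

lemma power_gcd_eq_one:
  fixes z :: "'a::monoid_mult"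
  assumes "z ^ a = 1" "z ^ b = 1"
  shows "z ^ gcd a b = 1"
proof (cases "a = 0")
  case False
  then obtain x y where "a * x = b * y + gcd a b" using bezout_nat by blast
  then have "z ^ (a * x) = z ^ (b * y) * z ^ gcd a b" by (simp add: power_add)
  with assms show ?thesis by (simp add: power_mult)
qed (use assms in simp)

lemma gcd_prod_diff_insert:
  fixes \<rho> :: "nat set"
  assumes "finite \<rho>" "pairwise coprime \<rho>" "J \<subseteq> \<rho>" "r \<in> \<rho>" "r \<notin> J"
  shows "gcd (\<Prod>(\<rho> - J)) (\<Prod>(\<rho> - {r})) = \<Prod>(\<rho> - insert r J)"
proof -
  define c where "c = \<Prod>(\<rho> - insert r J)"
  have "\<Prod>(\<rho> - J) = r * \<Prod>(\<rho> - J - {r})"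
    using assms by (intro prod.remove) auto
  also have "\<rho> - J - {r} = \<rho> - insert r J" by auto
  finally have "\<Prod>(\<rho> - J) = r * c" unfolding c_def .
  moreover have "\<Prod>(\<rho> - {r}) = \<Prod>J * c"
  proof -
    have "\<rho> - {r} = J \<union> (\<rho> - insert r J)" using assms by auto
    then have "\<Prod>(\<rho> - {r}) = \<Prod>(J \<union> (\<rho> - insert r J))" by (rule arg_cong)
    also have "\<dots> = \<Prod>J * c"
      unfolding c_def using assms by (intro prod.union_disjoint) (auto dest: finite_subset)
    finally show ?thesis .
  qed
  moreover have "coprime (\<Prod>J) r"
    using assms by (intro prod_coprime_left) (auto simp: pairwise_def)
  ultimately show ?thesis by (simp add: gcd_mult_right c_def)
qed

text \<open>For \<open>z\<^sup>N = 1\<close>, where \<open>N = \<Prod>\<rho>\<close> with pairwise coprime factors, the divisor \<open>N / \<Prod>I\<close>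
  annihilates \<open>z\<close> exactly when every \<open>N / r\<close> with \<open>r \<in> I\<close> does, because
  \<open>N / \<Prod>I\<close> is the gcd of these numbers.\<close>

lemma power_prod_diff_eq_one_iff:
  fixes z :: "'a::monoid_mult" and \<rho> :: "nat set"
  assumes fin: "finite \<rho>" and cop: "pairwise coprime \<rho>" and one: "z ^ \<Prod>\<rho> = 1" and "I \<subseteq> \<rho>"
  shows "z ^ \<Prod>(\<rho> - I) = 1 \<longleftrightarrow> (\<forall>r\<in>I. z ^ \<Prod>(\<rho> - {r}) = 1)"
proof
  assume h: "z ^ \<Prod>(\<rho> - I) = 1"
  show "\<forall>r\<in>I. z ^ \<Prod>(\<rho> - {r}) = 1"
  proof
    fix r assume "r \<in> I"
    then have "\<Prod>(\<rho> - I) dvd \<Prod>(\<rho> - {r})" using fin by (intro prod_dvd_prod_subset) auto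
    with h show "z ^ \<Prod>(\<rho> - {r}) = 1" by (rule power_eq_one_if_dvd)
  qed
next
  assume all: "\<forall>r\<in>I. z ^ \<Prod>(\<rho> - {r}) = 1"
  have "z ^ \<Prod>(\<rho> - J) = 1" if "J \<subseteq> I" for J
  proof -
    have "finite J" using finite_subset[OF _ fin] that \<open>I \<subseteq> \<rho>\<close> by blast
    then show ?thesis using that
    proof (induction J rule: finite_induct)
      case (insert r J)
      then have "z ^ \<Prod>(\<rho> - J) = 1" by simp
      moreover have "z ^ \<Prod>(\<rho> - {r}) = 1" using all insert.prems by simp
      ultimately have "z ^ gcd (\<Prod>(\<rho> - J)) (\<Prod>(\<rho> - {r})) = 1" by (rule power_gcd_eq_one)
      moreover have "gcd (\<Prod>(\<rho> - J)) (\<Prod>(\<rho> - {r})) = \<Prod>(\<rho> - insert r J)"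
        using insert.prems insert.hyps \<open>I \<subseteq> \<rho>\<close> by (intro gcd_prod_diff_insert[OF fin cop]) auto
      ultimately show ?case by simp
    qed (simp add: one)
  qed
  then show "z ^ \<Prod>(\<rho> - I) = 1" by simp
qed

lemma prod_div_prod_subset:
  fixes \<rho> :: "nat set"
  assumes "finite \<rho>" "0 \<notin> \<rho>" "I \<subseteq> \<rho>"
  shows "\<Prod>\<rho> div \<Prod>I = \<Prod>(\<rho> - I)"
proof -
  have "\<Prod>\<rho> = \<Prod>(\<rho> - I) * \<Prod>I"
    using prod.subset_diff[OF assms(3,1), of "\<lambda>x. x"] by simp
  moreover have "\<Prod>I \<noteq> 0" using finite_subset[OF assms(3,1)] assms(2,3) by (auto simp: prod_zero_iff)
  ultimately show ?thesis by simp
qed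

definition incl_excl_root :: "nat set \<Rightarrow> 'a::monoid_mult \<Rightarrow> bool" where
  "incl_excl_root \<rho> z \<longleftrightarrow> z ^ \<Prod>\<rho> = 1 \<and> (\<forall>r\<in>\<rho>. z ^ \<Prod>(\<rho> - {r}) \<noteq> 1)"

text \<open>If \<open>z\<^sup>N = 1\<close>, the subsets \<open>I\<close> with \<open>z\<^sup>N\<^sup>/\<^sup>\<Prod>\<^sup>I = 1\<close> are those of
  \<open>T = {r. z\<^sup>N\<^sup>/\<^sup>r = 1}\<close>; they contain equally many even and odd sets unless \<open>T = {}\<close>.\<close>

lemma card_even_subsets_power_eq_one:
  fixes z :: "'a::monoid_mult" and \<rho> :: "nat set"
  assumes fin: "finite \<rho>" and cop: "pairwise coprime \<rho>"
  shows "card {I. I \<subseteq> \<rho> \<and> even (card I) \<and> z ^ \<Prod>(\<rho> - I) = 1} =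
         card {I. I \<subseteq> \<rho> \<and> odd (card I) \<and> z ^ \<Prod>(\<rho> - I) = 1} +
         (if incl_excl_root \<rho> z then 1 else 0)"
proof (cases "z ^ \<Prod>\<rho> = 1")
  case False
  have "z ^ \<Prod>(\<rho> - I) \<noteq> 1" if "I \<subseteq> \<rho>" for I
  proof
    assume "z ^ \<Prod>(\<rho> - I) = 1"
    moreover have "\<Prod>(\<rho> - I) dvd \<Prod>\<rho>" using fin by (intro prod_dvd_prod_subset) auto
    ultimately show False using False power_eq_one_if_dvd by blast
  qed
  then have "{I. I \<subseteq> \<rho> \<and> even (card I) \<and> z ^ \<Prod>(\<rho> - I) = 1} = {}"
    and "{I. I \<subseteq> \<rho> \<and> odd (card I) \<and> z ^ \<Prod>(\<rho> - I) = 1} = {}" by blast+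
  moreover have "\<not> incl_excl_root \<rho> z" using False by (simp add: incl_excl_root_def)
  ultimately show ?thesis by (simp only: card.empty) simp
next
  case True
  define T where "T = {r\<in>\<rho>. z ^ \<Prod>(\<rho> - {r}) = 1}"
  have "I \<subseteq> \<rho> \<and> z ^ \<Prod>(\<rho> - I) = 1 \<longleftrightarrow> I \<subseteq> T" for I
    using power_prod_diff_eq_one_iff[OF fin cop True] unfolding T_def by blast
  then have sets: "{I. I \<subseteq> \<rho> \<and> even (card I) \<and> z ^ \<Prod>(\<rho> - I) = 1} = {I. I \<subseteq> T \<and> even (card I)}"
    "{I. I \<subseteq> \<rho> \<and> odd (card I) \<and> z ^ \<Prod>(\<rho> - I) = 1} = {I. I \<subseteq> T \<and> odd (card I)}"
    by blast+
  show ?thesis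
  proof (cases "T = {}")
    case True
    then have "incl_excl_root \<rho> z"
      using \<open>z ^ \<Prod>\<rho> = 1\<close> by (auto simp: incl_excl_root_def T_def)
    moreover have subsets: "{I. I \<subseteq> T \<and> even (card I)} = {{}}" "{I. I \<subseteq> T \<and> odd (card I)} = {}"
      using True by auto
    ultimately show ?thesis unfolding sets subsets by simp
  next
    case False
    have "finite T" using fin by (simp add: T_def)
    with False have "card {I. I \<subseteq> T \<and> {} \<subseteq> I \<and> even (card I)} =
                     card {I. I \<subseteq> T \<and> {} \<subseteq> I \<and> odd (card I)}"
      by (intro card_subsupersets_even_odd) auto
    moreover have "\<not> incl_excl_root \<rho> z"
      using False by (auto simp: incl_excl_root_def T_def)
    ultimately show ?thesis unfolding sets by simp
  qed
qed

lemma admissible_setD: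
  assumes "admissible_set \<rho>"
  shows "finite \<rho>" "pairwise coprime \<rho>" "\<And>r. r \<in> \<rho> \<Longrightarrow> r > 1"
    and "\<And>I. \<Prod>(\<rho> - I) > 0"
  using assms by (auto simp: admissible_set_def pairwise_def intro!: prod_pos)

text \<open>\<open>Q\<^sub>\<rho>\<close> is the quotient of two products of polynomials \<open>x\<^sup>m - 1\<close>, whose multiplicities
  at \<open>z\<close> count the even, resp.\ odd, subsets \<open>I\<close> with \<open>z\<^sup>N\<^sup>/\<^sup>\<Prod>\<^sup>I = 1\<close>.\<close>

lemma order_incl_excl_poly:
  assumes adm: "admissible_set \<rho>"
  shows "order z (map_poly of_int (incl_excl_poly \<rho>) :: complex poly) =
           (if incl_excl_root \<rho> z then 1 else 0)"
proof -
  note \<rho> = admissible_setD[OF adm]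
  define F where "F P = (\<Prod>I\<in>{I. I \<subseteq> \<rho> \<and> P (card I)}. xpow_minus_one (\<Prod>(\<rho> - I)))"
    for P :: "nat \<Rightarrow> bool"
  have Q: "incl_excl_poly \<rho> = F even div F odd"
    unfolding incl_excl_poly_def F_def using \<rho>(1,3)
    by (intro arg_cong2[where f = "(div)"] prod.cong)
      (auto intro!: arg_cong[where f = xpow_minus_one] prod_div_prod_subset)
  have fin: "finite {I. I \<subseteq> \<rho> \<and> P (card I)}" for P
    using \<rho>(1) by (auto intro: finite_subset[of _ "Pow \<rho>"])
  have F: "(map_poly of_int (F P) :: complex poly) =
             (\<Prod>I\<in>{I. I \<subseteq> \<rho> \<and> P (card I)}. monom 1 (\<Prod>(\<rho> - I)) - 1)" for P
    by (simp add: F_def map_poly_of_int_prod map_poly_of_int_xpow_minus_one)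
  have order_F: "order z (map_poly of_int (F P) :: complex poly) =
                   card {I. I \<subseteq> \<rho> \<and> P (card I) \<and> z ^ \<Prod>(\<rho> - I) = 1}" for P z
    unfolding F using fin \<rho>(4)
    by (subst order_prod_monom_one_minus_one) (auto intro: arg_cong[where f = card])
  have count: "order z (map_poly of_int (F even) :: complex poly) =
                 order z (map_poly of_int (F odd) :: complex poly) + (if incl_excl_root \<rho> z then 1 else 0)"
    for z
    unfolding order_F by (rule card_even_subsets_power_eq_one[OF \<rho>(1,2)])
  have "(map_poly of_int (F even) :: complex poly) \<noteq> 0"
    unfolding F using fin \<rho>(4) by (auto simp: monom_eq_1_iff)
  moreover have "lead_coeff (F odd) = 1"
    unfolding F_def lead_coeff_prod xpow_minus_one_def
    using lead_coeff_monom_one_minus_one \<rho>(4) by (intro prod.neutral) blast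
  ultimately show ?thesis
    unfolding Q by (subst order_map_poly_of_int_div) (simp_all add: count)
qed

lemma exp_root_unity_power_eq_one_iff:
  assumes "m > 0"
  shows "exp (2 * of_real pi * \<i> / of_nat m) ^ k = 1 \<longleftrightarrow> m dvd k"
proof -
  have "exp (2 * of_real pi * \<i> / of_nat m) ^ k = exp (2 * of_real pi * \<i> * of_nat k / of_nat m)"
    by (simp add: exp_of_nat_mult[symmetric] mult_ac)
  with complex_root_unity_eq_1[of m k] assms show ?thesis by simp
qed

text \<open>A primitive \<open>\<Prod>\<rho>\<close>-th root of unity is a root of \<open>Q\<^sub>\<rho>\<close>.\<close>

lemma prod_dvd_if_incl_excl_roots_subset:
  assumes "admissible_set \<rho>1" and roots: "\<And>z::complex. incl_excl_root \<rho>1 z \<Longrightarrow> incl_excl_root \<rho>2 z"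
  shows "\<Prod>\<rho>1 dvd \<Prod>\<rho>2"
proof -
  note \<rho>1 = admissible_setD[OF assms(1)]
  define N where "N = \<Prod>\<rho>1"
  define \<zeta> where "\<zeta> = exp (2 * of_real pi * \<i> / of_nat N)"
  have "N > 0" using \<rho>1(4)[of "{}"] by (simp add: N_def)
  then have \<zeta>_pow: "\<zeta> ^ k = 1 \<longleftrightarrow> N dvd k" for k
    unfolding \<zeta>_def by (rule exp_root_unity_power_eq_one_iff)
  have "incl_excl_root \<rho>1 \<zeta>"
    unfolding incl_excl_root_def \<zeta>_pow
  proof (intro conjI ballI)
    fix r assume "r \<in> \<rho>1"
    then have "N = r * \<Prod>(\<rho>1 - {r})" "r > 1"
      using prod.remove[OF \<rho>1(1)] \<rho>1(3) by (auto simp: N_def)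
    then have "\<Prod>(\<rho>1 - {r}) < N" using \<rho>1(4) by simp
    then show "\<not> N dvd \<Prod>(\<rho>1 - {r})" using \<rho>1(4) by (auto dest: dvd_imp_le)
  qed (simp add: N_def)
  then have "incl_excl_root \<rho>2 \<zeta>" by (rule roots)
  then show ?thesis by (simp add: incl_excl_root_def \<zeta>_pow N_def)
qed

text \<open>A primitive \<open>(\<Prod>\<rho>\<^sub>1 / r)\<close>-th root of unity is not a root of \<open>Q\<^sub>\<rho>\<^sub>1\<close>, so some
  \<open>\<Prod>\<rho>\<^sub>2 / r'\<close> is a multiple of \<open>\<Prod>\<rho>\<^sub>1 / r\<close>.\<close>

lemma exists_dvd_if_incl_excl_roots_subset:
  assumes "admissible_set \<rho>1" "admissible_set \<rho>2" "\<Prod>\<rho>1 = \<Prod>\<rho>2"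
    and roots: "\<And>z::complex. incl_excl_root \<rho>2 z \<Longrightarrow> incl_excl_root \<rho>1 z" and "r \<in> \<rho>1"
  shows "\<exists>r'\<in>\<rho>2. r' dvd r"
proof -
  note \<rho>1 = admissible_setD[OF assms(1)] and \<rho>2 = admissible_setD[OF assms(2)]
  define M where "M = \<Prod>(\<rho>1 - {r})"
  define \<zeta> where "\<zeta> = exp (2 * of_real pi * \<i> / of_nat M)"
  have "M > 0" using \<rho>1(4) by (simp add: M_def)
  then have \<zeta>_pow: "\<zeta> ^ k = 1 \<longleftrightarrow> M dvd k" for k
    unfolding \<zeta>_def by (rule exp_root_unity_power_eq_one_iff)
  have "\<not> incl_excl_root \<rho>1 \<zeta>"
    using \<open>r \<in> \<rho>1\<close> unfolding incl_excl_root_def \<zeta>_pow M_def by (blast intro: dvd_refl)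
  then have "\<not> incl_excl_root \<rho>2 \<zeta>" using roots by blast
  moreover have N: "\<Prod>\<rho>2 = r * M"
    using prod.remove[OF \<rho>1(1) \<open>r \<in> \<rho>1\<close>, of "\<lambda>x. x"] assms(3) by (simp add: M_def)
  ultimately obtain r' where "r' \<in> \<rho>2" "M dvd \<Prod>(\<rho>2 - {r'})"
    by (auto simp: incl_excl_root_def \<zeta>_pow)
  then obtain k where k: "\<Prod>(\<rho>2 - {r'}) = M * k" by (elim dvdE)
  have "r * M = \<Prod>\<rho>2" using N by simp
  also have "\<dots> = r' * \<Prod>(\<rho>2 - {r'})" using \<rho>2(1) \<open>r' \<in> \<rho>2\<close> by (rule prod.remove)
  also have "\<dots> = (r' * k) * M" by (simp add: k)
  finally have "r = r' * k" using \<open>M > 0\<close> by simp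
  with \<open>r' \<in> \<rho>2\<close> show ?thesis by (intro bexI[of _ r']) simp_all
qed

lemma incl_excl_roots_inject:
  assumes "admissible_set \<rho>1" "admissible_set \<rho>2"
    and roots: "\<And>z::complex. incl_excl_root \<rho>1 z \<longleftrightarrow> incl_excl_root \<rho>2 z"
  shows "\<rho>1 = \<rho>2"
proof -
  have prod_eq: "\<Prod>\<rho>1 = \<Prod>\<rho>2"
    using prod_dvd_if_incl_excl_roots_subset[OF assms(1)] prod_dvd_if_incl_excl_roots_subset[OF assms(2)]
      roots by (blast intro: dvd_antisym)
  have subset: "\<rho> \<subseteq> \<rho>'"
    if adm: "admissible_set \<rho>" "admissible_set \<rho>'" and "\<Prod>\<rho> = \<Prod>\<rho>'"
      and roots': "\<And>z::complex. incl_excl_root \<rho> z \<longleftrightarrow> incl_excl_root \<rho>' z" for \<rho> \<rho>'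
  proof
    fix r assume "r \<in> \<rho>"
    obtain r' where "r' \<in> \<rho>'" "r' dvd r"
      using exists_dvd_if_incl_excl_roots_subset[OF adm \<open>\<Prod>\<rho> = \<Prod>\<rho>'\<close>] roots' \<open>r \<in> \<rho>\<close> by blast
    obtain r'' where "r'' \<in> \<rho>" "r'' dvd r'"
      using exists_dvd_if_incl_excl_roots_subset[OF adm(2,1) \<open>\<Prod>\<rho> = \<Prod>\<rho>'\<close>[symmetric]] roots'
        \<open>r' \<in> \<rho>'\<close> by blast
    have "r'' = r"
    proof (rule ccontr)
      assume "r'' \<noteq> r"
      then have "coprime r'' r"
        using admissible_setD(2)[OF adm(1)] \<open>r \<in> \<rho>\<close> \<open>r'' \<in> \<rho>\<close> by (auto simp: pairwise_def)
      moreover have "r'' dvd r" using \<open>r'' dvd r'\<close> \<open>r' dvd r\<close> by (rule dvd_trans)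
      ultimately have "r'' = 1" by (simp add: coprime_absorb_left)
      with admissible_setD(3)[OF adm(1) \<open>r'' \<in> \<rho>\<close>] show False by simp
    qed
    with \<open>r'' dvd r'\<close> \<open>r' dvd r\<close> have "r' = r" by (simp add: dvd_antisym)
    with \<open>r' \<in> \<rho>'\<close> show "r \<in> \<rho>'" by simp
  qed
  show ?thesis
    using subset[OF assms(1,2) prod_eq roots] subset[OF assms(2,1) prod_eq[symmetric] roots[symmetric]]
    by (rule equalityI)
qed

theorem theorem6p2:
  fixes \<rho>1 \<rho>2 :: "nat set"
  assumes "admissible_set \<rho>1" and "admissible_set \<rho>2"
    and "incl_excl_poly \<rho>1 = incl_excl_poly \<rho>2"
  shows "\<rho>1 = \<rho>2"
proof (rule incl_excl_roots_inject[OF assms(1,2)])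
  fix z :: complex
  have "order z (map_poly of_int (incl_excl_poly \<rho>1) :: complex poly) =
        order z (map_poly of_int (incl_excl_poly \<rho>2))"
    using assms(3) by simp
  then show "incl_excl_root \<rho>1 z \<longleftrightarrow> incl_excl_root \<rho>2 z"
    by (simp add: order_incl_excl_poly[OF assms(1)] order_incl_excl_poly[OF assms(2)] split: if_splits)
qed

end
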